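(* Let $f(z)=\sum_{n=0}^\infty a_n z^n$ and $g(z)=\sum_{n=0}^\infty b_n z^n$ be analytic in $\mathbb{D}$ with $f\prec g$. Then for all $0\le r\le 1/3$, $$\sum_{n=0}^\infty |a_n|r^n+\left(\frac{1}{1+|a_0|}+\frac{r}{1-r}\right)\sum_{n=1}^{\infty}|a_n|^2r^{2n}\le \sum_{n=0}^\infty |b_n|r^n+\left(\frac{1}{1+|a_0|}+\frac{r}{1-r}\right)\sum_{n=1}^{\infty}|b_n|^2r^{2n}.$$
   Context: $\mathbb{D}$ is the open unit disk. $f\prec g$ (subordination) means there is an analytic $\omega:\mathbb{D}\to\mathbb{D}$ with $\omega(0)=0$ and $f=g\circ\omega$ on $\mathbb{D}$. *)

theory Defs
  imports "HOL-Complex_Analysis.Complex_Analysis"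
begin

definition subordinate :: "(complex \<Rightarrow> complex) \<Rightarrow> (complex \<Rightarrow> complex) \<Rightarrow> bool" where
  "subordinate f g \<longleftrightarrow>
     (\<exists>w. w holomorphic_on ball 0 1 \<and> w ` ball 0 1 \<subseteq> ball 0 1 \<and> w 0 = 0 \<and>
          (\<forall>z\<in>ball 0 1. f z = g (w z)))"

end

theory Submission
  imports Defs
begin

(* Write f = g o w with a Schwarz function w.  On the level of power series the coefficients
   satisfy A = B oo W with W $ 0 = 0, and below degree N the composition agrees with the
   polynomial (SUM i<N. b i * W ^ i).  Both inequalities are therefore statements about
   weighted sums of the first N coefficients of such polynomials.

   For Bohr's sum SUM |a n| r^n the weighted l1 sum is submultiplicative, so it is at most
   SUM |b i| S^i with S the weighted l1 sum of W.  Caratheodory's inequality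
   |w k| <= 2 (1 - |w 1|) for k >= 2 gives S <= |w 1| r + 2 (1 - |w 1|) r^2 / (1 - r) <= r,
   which is exactly where r <= 1/3 enters.

   For the quadratic sum (Littlewood's subordination principle), Parseval's identity on the
   circle |z| = r together with |w| <= r there shows that multiplication by W shrinks the
   weighted l2 sum by the factor r^2; Horner's scheme B = b 0 + W (b 1 + W (...)) then gives
   SUM |a n|^2 r^(2n) <= SUM |b n|^2 r^(2n).  As a 0 = b 0, the same holds from n = 1 on. *)

lemma summable_power2_nonneg:
  fixes x :: "nat \<Rightarrow> real"
  assumes "summable x" and "\<And>n. 0 \<le> x n"
  shows "summable (\<lambda>n. x n ^ 2)"
proof (rule summable_comparison_test_ev[OF _ assms(1)])
  have "eventually (\<lambda>n. x n < 1) sequentially"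
    using summable_LIMSEQ_zero[OF assms(1)] by (rule order_tendstoD) simp
  then show "eventually (\<lambda>n. norm (x n ^ 2) \<le> x n) sequentially"
    by eventually_elim (use assms(2) in \<open>simp add: power2_eq_square mult_left_le\<close>)
qed

lemma suminf_le_suminf_of_partial_sums_le:
  fixes x y :: "nat \<Rightarrow> real"
  assumes "summable x" and "summable y" and "\<And>N. (\<Sum>k<N. x k) \<le> (\<Sum>k<N. y k)"
  shows "suminf x \<le> suminf y"
  using LIMSEQ_le[OF summable_LIMSEQ[OF assms(1)] summable_LIMSEQ[OF assms(2)]] assms(3) by blast

section \<open>Weighted truncated coefficient sums\<close>

definition fps_abs_sum :: "real \<Rightarrow> nat \<Rightarrow> 'a::real_normed_field fps \<Rightarrow> real" where
  "fps_abs_sum \<rho> N F = (\<Sum>k<N. norm (F $ k) * \<rho> ^ k)"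

definition fps_sq_sum :: "real \<Rightarrow> nat \<Rightarrow> 'a::real_normed_field fps \<Rightarrow> real" where
  "fps_sq_sum \<rho> N F = (\<Sum>k<N. norm (F $ k) ^ 2 * \<rho> ^ (2 * k))"

lemma fps_abs_sum_cong:
  "(\<And>k. k < N \<Longrightarrow> F $ k = G $ k) \<Longrightarrow> fps_abs_sum \<rho> N F = fps_abs_sum \<rho> N G"
  unfolding fps_abs_sum_def by (intro sum.cong) auto

lemma fps_sq_sum_cong:
  "(\<And>k. k < N \<Longrightarrow> F $ k = G $ k) \<Longrightarrow> fps_sq_sum \<rho> N F = fps_sq_sum \<rho> N G"
  unfolding fps_sq_sum_def by (intro sum.cong) auto

lemma fps_abs_sum_nonneg: "0 \<le> \<rho> \<Longrightarrow> 0 \<le> fps_abs_sum \<rho> N F"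
  unfolding fps_abs_sum_def by (intro sum_nonneg) auto

lemma fps_abs_sum_const_mult: "fps_abs_sum \<rho> N (fps_const c * F) = norm c * fps_abs_sum \<rho> N F"
  unfolding fps_abs_sum_def by (simp add: sum_distrib_left norm_mult mult_ac)

lemma fps_abs_sum_add_le:
  "0 \<le> \<rho> \<Longrightarrow> fps_abs_sum \<rho> N (F + G) \<le> fps_abs_sum \<rho> N F + fps_abs_sum \<rho> N G"
  unfolding fps_abs_sum_def sum.distrib[symmetric]
  by (intro sum_mono) (auto simp: distrib_right[symmetric] intro!: mult_right_mono norm_triangle_ineq)

lemma fps_abs_sum_sum_le:
  fixes M :: nat
  assumes "0 \<le> \<rho>"
  shows "fps_abs_sum \<rho> N (\<Sum>i<M. F i) \<le> (\<Sum>i<M. fps_abs_sum \<rho> N (F i))"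
proof (induction M)
  case 0 then show ?case by (simp add: fps_abs_sum_def)
next
  case (Suc M)
  then show ?case using fps_abs_sum_add_le[OF assms, of N "\<Sum>i<M. F i" "F M"] by simp
qed

lemma fps_abs_sum_one_le: "fps_abs_sum \<rho> N 1 \<le> 1"
proof -
  have "fps_abs_sum \<rho> N 1 = (\<Sum>k\<in>{..<N}. if k = 0 then 1 else 0)"
    unfolding fps_abs_sum_def by (intro sum.cong) auto
  also have "\<dots> \<le> 1" by (simp only: sum.delta finite_lessThan) simp
  finally show ?thesis .
qed

lemma fps_abs_sum_mult_le:
  assumes "0 \<le> \<rho>"
  shows "fps_abs_sum \<rho> N (F * G) \<le> fps_abs_sum \<rho> N F * fps_abs_sum \<rho> N G"
proof -
  let ?x = "\<lambda>i. norm (F $ i) * \<rho> ^ i" and ?y = "\<lambda>j. norm (G $ j) * \<rho> ^ j"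
  have "norm ((F * G) $ k) * \<rho> ^ k \<le> (\<Sum>i\<le>k. ?x i * ?y (k - i))" for k
  proof -
    have "norm ((F * G) $ k) \<le> (\<Sum>i\<le>k. norm (F $ i) * norm (G $ (k - i)))"
      unfolding fps_mult_nth atLeast0AtMost by (rule order_trans[OF norm_sum]) (simp add: norm_mult)
    then have "norm ((F * G) $ k) * \<rho> ^ k \<le> (\<Sum>i\<le>k. norm (F $ i) * norm (G $ (k - i))) * \<rho> ^ k"
      using assms by (intro mult_right_mono) auto
    also have "\<dots> = (\<Sum>i\<le>k. ?x i * ?y (k - i))"
      unfolding sum_distrib_right by (intro sum.cong refl) (simp add: power_add[symmetric] mult_ac)
    finally show ?thesis .
  qed
  then have "fps_abs_sum \<rho> N (F * G) \<le> (\<Sum>k<N. \<Sum>i\<le>k. ?x i * ?y (k - i))"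
    unfolding fps_abs_sum_def by (intro sum_mono)
  also have "\<dots> = (\<Sum>(i, j)\<in>{(i, j). i + j < N}. ?x i * ?y j)"
    by (rule sum.triangle_reindex[symmetric])
  also have "\<dots> \<le> (\<Sum>(i, j)\<in>{..<N} \<times> {..<N}. ?x i * ?y j)"
    using assms by (intro sum_mono2) auto
  also have "\<dots> = fps_abs_sum \<rho> N F * fps_abs_sum \<rho> N G"
    unfolding fps_abs_sum_def sum_product sum.cartesian_product by simp
  finally show ?thesis .
qed

lemma fps_abs_sum_power_le:
  assumes "0 \<le> \<rho>"
  shows "fps_abs_sum \<rho> N (F ^ i) \<le> fps_abs_sum \<rho> N F ^ i"
proof (induction i)
  case 0 then show ?case using fps_abs_sum_one_le by simp
next
  case (Suc i)
  have "fps_abs_sum \<rho> N (F ^ Suc i) \<le> fps_abs_sum \<rho> N F * fps_abs_sum \<rho> N (F ^ i)"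
    using fps_abs_sum_mult_le[OF assms, of N F "F ^ i"] by simp
  also have "\<dots> \<le> fps_abs_sum \<rho> N F * fps_abs_sum \<rho> N F ^ i"
    by (rule mult_left_mono[OF Suc.IH fps_abs_sum_nonneg[OF assms]])
  finally show ?case by simp
qed

lemma fps_compose_nth_eq_sum_lessThan:
  fixes B W :: "'a::comm_ring_1 fps"
  assumes "W $ 0 = 0" and "k < N"
  shows "(B oo W) $ k = (\<Sum>i<N. fps_const (B $ i) * W ^ i) $ k"
proof -
  have "(B oo W) $ k = (\<Sum>i=0..k. B $ i * (W ^ i) $ k)"
    by (rule fps_compose_nth)
  also have "\<dots> = (\<Sum>i<N. B $ i * (W ^ i) $ k)"
    by (rule sum.mono_neutral_left) (use assms startsby_zero_power_prefix[OF assms(1)] in auto)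
  also have "\<dots> = (\<Sum>i<N. fps_const (B $ i) * W ^ i) $ k"
    by (simp add: fps_sum_nth)
  finally show ?thesis .
qed

lemma fps_abs_sum_compose_le:
  fixes B W :: "'a::real_normed_field fps"
  assumes "W $ 0 = 0" and "0 \<le> \<rho>" and "fps_abs_sum \<rho> N W \<le> \<rho>"
  shows "fps_abs_sum \<rho> N (B oo W) \<le> fps_abs_sum \<rho> N B"
proof -
  have "fps_abs_sum \<rho> N (B oo W) = fps_abs_sum \<rho> N (\<Sum>i<N. fps_const (B $ i) * W ^ i)"
    by (rule fps_abs_sum_cong) (rule fps_compose_nth_eq_sum_lessThan[OF assms(1)])
  also have "\<dots> \<le> (\<Sum>i<N. norm (B $ i) * fps_abs_sum \<rho> N (W ^ i))"
    using fps_abs_sum_sum_le[OF assms(2), of N "\<lambda>i. fps_const (B $ i) * W ^ i" N]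
    by (simp add: fps_abs_sum_const_mult)
  also have "\<dots> \<le> (\<Sum>i<N. norm (B $ i) * \<rho> ^ i)"
  proof (intro sum_mono mult_left_mono)
    fix i
    show "fps_abs_sum \<rho> N (W ^ i) \<le> \<rho> ^ i"
      using fps_abs_sum_power_le[OF assms(2)] power_mono[OF assms(3) fps_abs_sum_nonneg[OF assms(2)]]
      by (rule order_trans)
  qed simp
  finally show ?thesis unfolding fps_abs_sum_def .
qed

lemma fps_sq_sum_const_plus_le:
  fixes F :: "'a::real_normed_field fps"
  assumes "F $ 0 = 0"
  shows "fps_sq_sum \<rho> N (fps_const c + F) \<le> norm c ^ 2 + fps_sq_sum \<rho> N F"
proof (cases N)
  case (Suc N')
  then show ?thesis
    using assms by (simp add: fps_sq_sum_def sum.lessThan_Suc_shift del: sum.lessThan_Suc)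
qed (simp add: fps_sq_sum_def)

lemma fps_sq_sum_sum_power_le:
  fixes W :: "'a::real_normed_field fps"
  assumes "W $ 0 = 0" and "0 \<le> \<rho>"
    and contraction: "\<And>Q. fps_sq_sum \<rho> N (W * Q) \<le> \<rho> ^ 2 * fps_sq_sum \<rho> N Q"
  shows "fps_sq_sum \<rho> N (\<Sum>i<M. fps_const (b i) * W ^ i) \<le> (\<Sum>i<M. norm (b i) ^ 2 * \<rho> ^ (2 * i))"
proof (induction M arbitrary: b)
  case 0 then show ?case by (simp add: fps_sq_sum_def)
next
  case (Suc M)
  define S where "S = (\<Sum>i<M. fps_const (b (Suc i)) * W ^ i)"
  have "(\<Sum>i<Suc M. fps_const (b i) * W ^ i) = fps_const (b 0) + W * S"
    unfolding S_def by (simp add: sum.lessThan_Suc_shift sum_distrib_left mult_ac del: sum.lessThan_Suc)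
  moreover have "(W * S) $ 0 = 0" using assms(1) by simp
  ultimately have "fps_sq_sum \<rho> N (\<Sum>i<Suc M. fps_const (b i) * W ^ i)
      \<le> norm (b 0) ^ 2 + fps_sq_sum \<rho> N (W * S)"
    by (simp add: fps_sq_sum_const_plus_le)
  also have "\<dots> \<le> norm (b 0) ^ 2 + \<rho> ^ 2 * (\<Sum>i<M. norm (b (Suc i)) ^ 2 * \<rho> ^ (2 * i))"
    using contraction[of S] Suc.IH[of "\<lambda>i. b (Suc i)"] mult_left_mono[of _ _ "\<rho> ^ 2"]
    unfolding S_def by fastforce
  also have "\<dots> = (\<Sum>i<Suc M. norm (b i) ^ 2 * \<rho> ^ (2 * i))"
    by (simp add: sum.lessThan_Suc_shift sum_distrib_left power_add power_mult power_mult_distrib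
        mult_ac del: sum.lessThan_Suc)
  finally show ?case .
qed

lemma fps_sq_sum_compose_le:
  fixes B W :: "'a::real_normed_field fps"
  assumes "W $ 0 = 0" and "0 \<le> \<rho>"
    and "\<And>Q. fps_sq_sum \<rho> N (W * Q) \<le> \<rho> ^ 2 * fps_sq_sum \<rho> N Q"
  shows "fps_sq_sum \<rho> N (B oo W) \<le> fps_sq_sum \<rho> N B"
proof -
  have "fps_sq_sum \<rho> N (B oo W) = fps_sq_sum \<rho> N (\<Sum>i<N. fps_const (B $ i) * W ^ i)"
    by (rule fps_sq_sum_cong) (rule fps_compose_nth_eq_sum_lessThan[OF assms(1)])
  also have "\<dots> \<le> fps_sq_sum \<rho> N B"
    unfolding fps_sq_sum_def[of _ _ B] by (rule fps_sq_sum_sum_power_le[OF assms])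
  finally show ?thesis .
qed

section \<open>Fourier coefficients on circles\<close>

lemma has_integral_cis_int:
  fixes j :: int
  shows "((\<lambda>t. cis (of_int j * t)) has_integral (if j = 0 then 2 * pi else 0)) {0..2*pi}"
proof (cases "j = 0")
  case True then show ?thesis
    using has_integral_const_real[of "1::complex" 0 "2*pi"] by (simp add: scaleR_conv_of_real)
next
  case False
  define F where "F t = inverse (\<i> * of_int j) * cis (of_int j * t)" for t
  have "(F has_vector_derivative cis (of_int j * t)) (at t within {0..2*pi})" for t
  proof -
    have "((\<lambda>t. cis (of_int j * t)) has_derivative (\<lambda>h. (of_int j * h) *\<^sub>R (\<i> * cis (of_int j * t))))
        (at t within {0..2*pi})"
      by (intro has_derivative_cis derivative_intros)
    then have "(F has_derivative (\<lambda>h. inverse (\<i> * of_int j) * ((of_int j * h) *\<^sub>R (\<i> * cis (of_int j * t)))))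
        (at t within {0..2*pi})"
      unfolding F_def by (rule has_derivative_mult_right)
    then show ?thesis
      unfolding has_vector_derivative_def using False by (simp add: scaleR_conv_of_real field_simps)
  qed
  then have "((\<lambda>t. cis (of_int j * t)) has_integral (F (2*pi) - F 0)) {0..2*pi}"
    by (intro fundamental_theorem_of_calculus) auto
  moreover have "cis (of_int j * (2*pi)) = 1"
    using cis_multiple_2pi[of "of_int j"] by (simp add: mult_ac)
  ultimately show ?thesis using False by (simp add: F_def)
qed

lemma has_integral_suminf_Weierstrass:
  fixes F :: "nat \<Rightarrow> real \<Rightarrow> 'a::banach"
  assumes cont: "\<And>n. continuous_on {a..b} (F n)"
    and bound: "\<And>n t. t \<in> {a..b} \<Longrightarrow> norm (F n t) \<le> M n" and "summable M"
    and integral: "\<And>n. (F n has_integral I n) {a..b}"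
  shows "summable I" and "((\<lambda>t. \<Sum>n. F n t) has_integral (\<Sum>n. I n)) {a..b}"
proof -
  have "uniform_limit {a..b} (\<lambda>N t. \<Sum>n<N. F n t) (\<lambda>t. \<Sum>n. F n t) sequentially"
    by (rule Weierstrass_m_test[OF bound \<open>summable M\<close>])
  then obtain I' J where I': "\<And>N. ((\<lambda>t. \<Sum>n<N. F n t) has_integral I' N) {a..b}"
    and J: "((\<lambda>t. \<Sum>n. F n t) has_integral J) {a..b}" and "I' \<longlonglongrightarrow> J"
    by (rule uniform_limit_integral) (auto intro!: continuous_on_sum cont)
  moreover have "I' = (\<lambda>N. \<Sum>n<N. I n)"
    using has_integral_unique[OF I' has_integral_sum[OF _ integral]] by auto
  ultimately have "I sums J" unfolding sums_def by simp
  then show "summable I" and "((\<lambda>t. \<Sum>n. F n t) has_integral (\<Sum>n. I n)) {a..b}"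
    using J by (auto simp: sums_iff)
qed

lemma powser_circle_fourier_coeff:
  fixes c :: "nat \<Rightarrow> complex" and m :: int
  assumes summable: "summable (\<lambda>n. norm (c n) * \<rho> ^ n)" and "0 \<le> \<rho>"
    and h: "\<And>t. (\<lambda>n. c n * (of_real \<rho> * cis t) ^ n) sums h t"
  shows "((\<lambda>t. h t * cis (of_int m * t)) has_integral
           (if m \<le> 0 then 2 * pi * c (nat (- m)) * \<rho> ^ nat (- m) else 0)) {0..2*pi}"
proof -
  define F where "F n t = (c n * \<rho> ^ n) * cis (of_int (int n + m) * t)" for n t
  define I where "I n = (if int n + m = 0 then 2 * pi * c n * \<rho> ^ n else 0)" for n
  have F_eq: "c n * (of_real \<rho> * cis t) ^ n * cis (of_int m * t) = F n t" for n t
  proof -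
    have "(of_real \<rho> * cis t) ^ n * cis (of_int m * t) = of_real \<rho> ^ n * cis (of_int (int n + m) * t)"
      by (simp only: power_mult_distrib Complex.DeMoivre mult.assoc cis_mult) (simp add: algebra_simps)
    then show ?thesis by (simp add: F_def mult.assoc)
  qed
  have integral_F: "(F n has_integral I n) {0..2*pi}" for n
    using has_integral_mult_right[OF has_integral_cis_int, of "c n * \<rho> ^ n" "int n + m"]
    unfolding F_def[abs_def] I_def by (cases "int n + m = 0") (simp_all add: mult_ac)
  have bound_F: "norm (F n t) \<le> norm (c n) * \<rho> ^ n" for n t
    using \<open>0 \<le> \<rho>\<close> by (simp add: F_def norm_mult norm_power)
  have cont_F: "continuous_on {0..2*pi} (F n)" for n
    unfolding F_def by (intro continuous_intros)
  note integral = has_integral_suminf_Weierstrass(2)[OF cont_F bound_F summable integral_F]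
  have "(\<lambda>n. F n t) sums (h t * cis (of_int m * t))" for t
    using sums_mult2[OF h[of t], where c = "cis (of_int m * t)"] unfolding F_eq .
  then have sum_F: "(\<lambda>t. \<Sum>n. F n t) = (\<lambda>t. h t * cis (of_int m * t))"
    by (intro ext sums_unique[symmetric])
  have sum_I: "(\<Sum>n. I n) = (if m \<le> 0 then 2 * pi * c (nat (- m)) * \<rho> ^ nat (- m) else 0)"
  proof (cases "m \<le> 0")
    case True
    then have I_single: "I = (\<lambda>n. if n = nat (- m) then 2 * pi * c n * \<rho> ^ n else 0)"
      by (intro ext) (auto simp: I_def)
    have "I sums (2 * pi * c (nat (- m)) * \<rho> ^ nat (- m))"
      unfolding I_single by (rule sums_single)
    with True show ?thesis by (simp add: sums_iff)
  qed (auto simp: I_def)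
  show ?thesis using integral unfolding sum_F sum_I of_real_power .
qed

lemma powser_circle_norm_le:
  fixes c :: "nat \<Rightarrow> complex"
  assumes "summable (\<lambda>n. norm (c n) * \<rho> ^ n)" and "0 \<le> \<rho>"
    and "(\<lambda>n. c n * (of_real \<rho> * cis t) ^ n) sums h"
  shows "norm h \<le> (\<Sum>n. norm (c n) * \<rho> ^ n)"
proof -
  have "(\<lambda>n. norm (c n * (of_real \<rho> * cis t) ^ n)) = (\<lambda>n. norm (c n) * \<rho> ^ n)"
    using \<open>0 \<le> \<rho>\<close> by (simp add: norm_mult norm_power)
  then show ?thesis
    using summable_norm[of "\<lambda>n. c n * (of_real \<rho> * cis t) ^ n"] assms(1) sums_unique[OF assms(3)]
    by simp
qed

lemma powser_circle_Parseval:
  fixes c :: "nat \<Rightarrow> complex"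
  assumes summable: "summable (\<lambda>n. norm (c n) * \<rho> ^ n)" and "0 \<le> \<rho>"
    and h: "\<And>t. (\<lambda>n. c n * (of_real \<rho> * cis t) ^ n) sums h t"
    and cont: "continuous_on {0..2*pi} h"
  shows "summable (\<lambda>n. norm (c n) ^ 2 * \<rho> ^ (2 * n))"
    and "((\<lambda>t. norm (h t) ^ 2) has_integral (2 * pi * (\<Sum>n. norm (c n) ^ 2 * \<rho> ^ (2 * n)))) {0..2*pi}"
proof -
  define B where "B = (\<Sum>n. norm (c n) * \<rho> ^ n)"
  have h_le: "norm (h t) \<le> B" for t
    unfolding B_def by (rule powser_circle_norm_le[OF summable \<open>0 \<le> \<rho>\<close> h])
  define x where "x n = norm (c n) ^ 2 * \<rho> ^ (2 * n)" for n
  define F where "F n t = (cnj (c n) * \<rho> ^ n) * (h t * cis (of_int (- int n) * t))" for n t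
  have integral_F: "(F n has_integral of_real (2 * pi * x n)) {0..2*pi}" for n
  proof -
    have "cnj (c n) * \<rho> ^ n * (2 * pi * c n * \<rho> ^ n) = 2 * pi * (c n * cnj (c n)) * of_real (\<rho> ^ n * \<rho> ^ n)"
      by (simp add: mult_ac)
    also have "\<dots> = of_real (2 * pi * x n)"
      unfolding x_def complex_norm_square[symmetric] power_mult power2_eq_square of_real_mult of_real_power
      by (simp add: power2_eq_square power_mult_distrib)
    finally have eq: "cnj (c n) * \<rho> ^ n * (2 * pi * c n * \<rho> ^ n) = of_real (2 * pi * x n)" .
    have "((\<lambda>t. h t * cis (of_int (- int n) * t)) has_integral 2 * pi * c n * \<rho> ^ n) {0..2*pi}"
      using powser_circle_fourier_coeff[OF summable \<open>0 \<le> \<rho>\<close> h, of "- int n"] by simp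
    from has_integral_mult_right[OF this, of "cnj (c n) * \<rho> ^ n"] show ?thesis
      unfolding F_def[abs_def] eq .
  qed
  have bound_F: "norm (F n t) \<le> norm (c n) * \<rho> ^ n * B" for n t
    using \<open>0 \<le> \<rho>\<close> h_le[of t] by (simp add: F_def norm_mult norm_power mult_left_mono)
  have cont_F: "continuous_on {0..2*pi} (F n)" for n
    unfolding F_def by (intro continuous_intros cont)
  have "summable (\<lambda>n. norm (c n) * \<rho> ^ n * B)"
    using summable by (rule summable_mult2)
  note Weierstrass = has_integral_suminf_Weierstrass[OF cont_F bound_F this integral_F]
  from Weierstrass(1) show "summable x"
    by (simp add: summable_of_real_iff)
  have "(\<Sum>n. F n t) = of_real (norm (h t) ^ 2)" for t
  proof -
    have cnj_term: "cnj (c n * (of_real \<rho> * cis t) ^ n)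
        = cnj (c n) * \<rho> ^ n * cis (of_int (- int n) * t)" for n
      by (simp add: power_mult_distrib Complex.DeMoivre cis_cnj)
    have "(\<lambda>n. cnj (c n) * \<rho> ^ n * cis (of_int (- int n) * t)) sums cnj (h t)"
      using sums_cnj[THEN iffD2, OF h[of t]] unfolding cnj_term .
    from sums_mult[OF this, of "h t"] have "(\<lambda>n. F n t) sums (h t * cnj (h t))"
      by (simp add: F_def mult_ac)
    then show ?thesis
      unfolding complex_norm_square by (rule sums_unique[symmetric])
  qed
  moreover have "(\<Sum>n. complex_of_real (2 * pi * x n)) = of_real (2 * pi * (\<Sum>n. x n))"
    using \<open>summable x\<close> by (simp add: suminf_of_real suminf_mult)
  ultimately show "((\<lambda>t. norm (h t) ^ 2) has_integral (2 * pi * (\<Sum>n. x n))) {0..2*pi}"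
    using has_integral_linear[OF Weierstrass(2) bounded_linear_Re] by (simp add: o_def)
qed

text \<open>Caratheodory's inequality in Fourier form: \<open>M - Re \<phi>\<close> is nonnegative, so each of its
  Fourier coefficients is bounded by its mean.\<close>

lemma fourier_coeff_norm_le_of_Re_le:
  fixes \<phi> :: "real \<Rightarrow> complex" and j :: int
  assumes Re_le: "\<And>t. Re (\<phi> t) \<le> M"
    and integral: "(\<phi> has_integral A) {0..2*pi}"
    and coeff_neg: "((\<lambda>t. \<phi> t * cis (of_int (- j) * t)) has_integral B) {0..2*pi}"
    and coeff_pos: "((\<lambda>t. \<phi> t * cis (of_int j * t)) has_integral 0) {0..2*pi}"
    and "j \<noteq> 0"
  shows "norm B \<le> 2 * (2 * pi * M - Re A)"
proof -
  define v where "v t = M - Re (\<phi> t)" for t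
  have "((\<lambda>t. of_real M * cis (of_int (- j) * t)
          - (\<phi> t * cis (of_int (- j) * t) + cnj (\<phi> t * cis (of_int j * t))) / 2)
      has_integral (of_real M * 0 - (B + cnj 0) / 2)) {0..2*pi}"
    using \<open>j \<noteq> 0\<close> has_integral_cis_int[of "- j"] has_integral_cnj[THEN iffD2, OF coeff_pos]
    by (intro has_integral_diff has_integral_mult_right has_integral_divide has_integral_add coeff_neg)
       (auto simp: o_def)
  moreover have "of_real M * cis (of_int (- j) * t)
      - (\<phi> t * cis (of_int (- j) * t) + cnj (\<phi> t * cis (of_int j * t))) / 2
      = of_real (v t) * cis (of_int (- j) * t)" for t
    using complex_add_cnj[of "\<phi> t"]
    by (simp add: v_def cis_cnj field_simps) (metis distrib_right mult.assoc)
  ultimately have coeff_v: "((\<lambda>t. of_real (v t) * cis (of_int (- j) * t)) has_integral - B / 2) {0..2*pi}"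
    by simp
  have integral_v: "(v has_integral (2 * pi * M - Re A)) {0..2*pi}"
    using has_integral_diff[OF has_integral_const_real[of M 0 "2*pi"]
        has_integral_linear[OF integral bounded_linear_Re]]
    unfolding v_def[abs_def] by (simp add: o_def)
  have "norm (of_real (v t) * cis (of_int (- j) * t)) \<le> v t" for t
  proof -
    have "0 \<le> v t" using Re_le[of t] by (simp add: v_def)
    then show ?thesis by (simp add: norm_mult)
  qed
  then have "norm (- B / 2) \<le> (2 * pi * M - Re A) \<bullet> 1"
    by (intro has_integral_norm_bound_integral_component[OF coeff_v integral_v]) simp
  then show ?thesis by simp
qed

section \<open>Power series on the unit disc\<close>

lemma disc_powser_abs_summable:
  fixes c :: "nat \<Rightarrow> complex"
  assumes "\<And>z. z \<in> ball 0 1 \<Longrightarrow> (\<lambda>n. c n * z ^ n) sums h z" and "0 \<le> \<rho>" "\<rho> < 1"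
  shows "summable (\<lambda>n. norm (c n) * \<rho> ^ n)"
proof -
  define x where "x = (1 + \<rho>) / 2"
  have x: "\<rho> < x" "x < 1"
    using assms by (simp_all add: x_def)
  then have "summable (\<lambda>n. c n * of_real x ^ n)"
    using assms by (intro sums_summable[OF assms(1)]) simp
  then have "summable (\<lambda>n. norm (c n * of_real \<rho> ^ n))"
    by (rule powser_insidea) (use assms x in auto)
  then show ?thesis
    using assms(2) by (simp add: norm_mult norm_power)
qed

lemma disc_powser_has_fps_expansion:
  fixes c :: "nat \<Rightarrow> complex"
  assumes sums: "\<And>z. z \<in> ball 0 1 \<Longrightarrow> (\<lambda>n. c n * z ^ n) sums h z"
  shows "h has_fps_expansion Abs_fps c"
  unfolding has_fps_expansion_def
proof
  have "summable (\<lambda>n. c n * (1/2) ^ n)"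
    using sums[of "1/2"] by (simp add: sums_iff)
  then have "ereal (1/2) \<le> conv_radius c"
    using conv_radius_geI[of c "1/2"] by simp
  then show "0 < fps_conv_radius (Abs_fps c)"
    unfolding fps_conv_radius_def by (simp add: order.strict_trans2[rotated])
  have "eval_fps (Abs_fps c) z = h z" if "z \<in> ball 0 1" for z
    using sums_unique[OF sums[OF that]] by (simp add: eval_fps_def)
  moreover have "eventually (\<lambda>z. z \<in> ball 0 1) (nhds (0::complex))"
    by (rule eventually_nhds_in_open) auto
  ultimately show "eventually (\<lambda>z. eval_fps (Abs_fps c) z = h z) (nhds 0)"
    by (auto elim: eventually_mono)
qed

lemma holomorphic_on_ball_sums_fps_expansion:
  assumes "h holomorphic_on ball 0 1" and "z \<in> ball 0 1"
  shows "(\<lambda>n. fps_expansion h 0 $ n * z ^ n) sums h z"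
  using holomorphic_power_series[OF assms] by (simp add: fps_expansion_def)

lemma holomorphic_on_ball_has_fps_expansion:
  assumes "h holomorphic_on ball 0 1"
  shows "h has_fps_expansion fps_expansion h 0"
  using assms by (intro analytic_at_imp_has_fps_expansion_0 holomorphic_on_imp_analytic_at) auto

lemma holomorphic_circle_Parseval:
  assumes h: "h holomorphic_on ball 0 1" and "0 \<le> \<rho>" "\<rho> < 1"
  shows "summable (\<lambda>n. norm (fps_expansion h 0 $ n) ^ 2 * \<rho> ^ (2 * n))"
    and "((\<lambda>t. norm (h (of_real \<rho> * cis t)) ^ 2) has_integral
           (2 * pi * (\<Sum>n. norm (fps_expansion h 0 $ n) ^ 2 * \<rho> ^ (2 * n)))) {0..2*pi}"
proof -
  have sums: "(\<lambda>n. fps_expansion h 0 $ n * z ^ n) sums h z" if "z \<in> ball 0 1" for z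
    using holomorphic_on_ball_sums_fps_expansion[OF h that] .
  have cont: "continuous_on {0..2*pi} (\<lambda>t. h (of_real \<rho> * cis t))"
    by (rule continuous_on_compose2[OF holomorphic_on_imp_continuous_on[OF h]])
       (use assms in \<open>auto intro!: continuous_intros simp: norm_mult\<close>)
  have circle: "(\<lambda>n. fps_expansion h 0 $ n * (of_real \<rho> * cis t) ^ n) sums h (of_real \<rho> * cis t)" for t
    using assms by (intro sums) (simp add: norm_mult)
  show "summable (\<lambda>n. norm (fps_expansion h 0 $ n) ^ 2 * \<rho> ^ (2 * n))"
    and "((\<lambda>t. norm (h (of_real \<rho> * cis t)) ^ 2) has_integral
           (2 * pi * (\<Sum>n. norm (fps_expansion h 0 $ n) ^ 2 * \<rho> ^ (2 * n)))) {0..2*pi}"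
    using powser_circle_Parseval[OF disc_powser_abs_summable[OF sums assms(2,3)] assms(2) circle cont]
    by blast+
qed

lemma fps_expansion_mult_sq_suminf_le:
  assumes w: "w holomorphic_on ball 0 1" and q: "q holomorphic_on ball 0 1"
    and "0 \<le> \<rho>" "\<rho> < 1" and w_le: "\<And>t. norm (w (of_real \<rho> * cis t)) \<le> M"
  shows "(\<Sum>n. norm (fps_expansion (\<lambda>z. w z * q z) 0 $ n) ^ 2 * \<rho> ^ (2 * n))
           \<le> M ^ 2 * (\<Sum>n. norm (fps_expansion q 0 $ n) ^ 2 * \<rho> ^ (2 * n))"
proof -
  have wq: "(\<lambda>z. w z * q z) holomorphic_on ball 0 1"
    using w q by (rule holomorphic_on_mult)
  have "norm (w (of_real \<rho> * cis t) * q (of_real \<rho> * cis t)) ^ 2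
      \<le> M ^ 2 * norm (q (of_real \<rho> * cis t)) ^ 2" for t
    unfolding norm_mult power_mult_distrib
    by (intro mult_right_mono power_mono w_le) auto
  from has_integral_le[OF holomorphic_circle_Parseval(2)[OF wq assms(3,4)]
      has_integral_mult_right[OF holomorphic_circle_Parseval(2)[OF q assms(3,4)]] this]
  show ?thesis by simp
qed

lemma fps_sq_sum_fps_expansion_mult_le:
  assumes w: "w holomorphic_on ball 0 1"
    and "0 \<le> \<rho>" "\<rho> < 1" and w_le: "\<And>t. norm (w (of_real \<rho> * cis t)) \<le> M"
  shows "fps_sq_sum \<rho> N (fps_expansion w 0 * Q) \<le> M ^ 2 * fps_sq_sum \<rho> N Q"
proof -
  \<comment> \<open>Only the first \<open>N\<close> coefficients of \<open>Q\<close> matter, so \<open>Q\<close> may be replaced by a polynomial,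
    which is holomorphic and thus amenable to Parseval's identity.\<close>
  define p where "p = truncate_fps N Q"
  have "eval_fps (fps_of_poly p) = poly p"
    by (rule ext) simp
  then have "poly p has_fps_expansion fps_of_poly p"
    using eval_fps_has_fps_expansion[of "fps_of_poly p"] by simp
  then have "(\<lambda>z. w z * poly p z) has_fps_expansion fps_expansion w 0 * fps_of_poly p"
    by (intro has_fps_expansion_mult holomorphic_on_ball_has_fps_expansion w)
  then have fps_wp: "fps_expansion (\<lambda>z. w z * poly p z) 0 = fps_expansion w 0 * fps_of_poly p"
    by (rule fps_expansion_eqI)
  have fps_p: "fps_expansion (poly p) 0 = fps_of_poly p"
    using \<open>poly p has_fps_expansion fps_of_poly p\<close> by (rule fps_expansion_eqI)
  have hol_p: "poly p holomorphic_on ball 0 1"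
    by (auto intro!: holomorphic_intros)
  have "fps_sq_sum \<rho> N (fps_expansion w 0 * Q) = fps_sq_sum \<rho> N (fps_expansion w 0 * fps_of_poly p)"
    by (rule fps_sq_sum_cong) (auto simp: fps_mult_nth p_def coeff_truncate_fps intro!: sum.cong)
  also have "\<dots> \<le> (\<Sum>n. norm ((fps_expansion w 0 * fps_of_poly p) $ n) ^ 2 * \<rho> ^ (2 * n))"
    unfolding fps_sq_sum_def
    using holomorphic_circle_Parseval(1)[OF holomorphic_on_mult[OF w hol_p] assms(2,3)]
    by (intro sum_le_suminf) (auto simp: fps_wp)
  also have "\<dots> \<le> M ^ 2 * (\<Sum>n. norm (fps_of_poly p $ n) ^ 2 * \<rho> ^ (2 * n))"
    using fps_expansion_mult_sq_suminf_le[OF w hol_p assms(2,3) w_le] by (simp add: fps_wp fps_p)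
  also have "(\<Sum>n. norm (fps_of_poly p $ n) ^ 2 * \<rho> ^ (2 * n)) = fps_sq_sum \<rho> N Q"
    unfolding fps_sq_sum_def by (subst suminf_finite[of "{..<N}"]) (auto simp: p_def coeff_truncate_fps)
  finally show ?thesis .
qed

lemma disc_powser_sq_summable:
  fixes c :: "nat \<Rightarrow> complex"
  assumes "\<And>z. z \<in> ball 0 1 \<Longrightarrow> (\<lambda>n. c n * z ^ n) sums h z" and "0 \<le> \<rho>" "\<rho> < 1"
  shows "summable (\<lambda>n. norm (c n) ^ 2 * \<rho> ^ (2 * n))"
  using summable_power2_nonneg[OF disc_powser_abs_summable[OF assms]] assms(2)
  by (simp add: power_mult_distrib power_mult[of \<rho>, symmetric] mult.commute[of 2])

section \<open>Schwarz functions\<close>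

lemma unit_rotation_to_norm:
  fixes z :: complex
  obtains \<sigma> where "norm \<sigma> = 1" and "\<sigma> * z = of_real (norm z)"
proof (rule that)
  show "norm (cis (- Arg z)) = 1"
    by simp
  show "cis (- Arg z) * z = of_real (norm z)"
  proof (cases "z = 0")
    case False
    then have "cis (- Arg z) * z = of_real (norm z) * (cis (- Arg z) * cis (Arg z))"
      by (simp add: cis_Arg sgn_eq field_simps)
    then show ?thesis by (simp add: cis_mult)
  qed simp
qed

text \<open>Caratheodory's inequality, applied to \<open>\<phi> t = \<sigma> * h t * cis (- t)\<close>, whose real part is at
  most \<open>\<rho>\<close>.\<close>

lemma fourier_coeff_bound_of_norm_le:
  fixes h :: "real \<Rightarrow> complex" and c :: "nat \<Rightarrow> complex"
  assumes h_le: "\<And>t. norm (h t) \<le> \<rho>"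
    and coeff: "\<And>m. ((\<lambda>t. h t * cis (of_int m * t)) has_integral
                  (if m \<le> 0 then 2 * pi * c (nat (- m)) * \<rho> ^ nat (- m) else 0)) {0..2*pi}"
    and "c 0 = 0" and "2 \<le> k"
  shows "norm (c k) * \<rho> ^ k \<le> 2 * \<rho> * (1 - norm (c 1))"
proof -
  obtain \<sigma> where norm_\<sigma>: "norm \<sigma> = 1" and \<sigma>_c1: "\<sigma> * c 1 = of_real (norm (c 1))"
    by (rule unit_rotation_to_norm)
  define \<phi> where "\<phi> t = \<sigma> * (h t * cis (of_int (- 1) * t))" for t
  have shift: "\<phi> t * cis (of_int j * t) = \<sigma> * (h t * cis (of_int (j - 1) * t))" for t j
    unfolding \<phi>_def mult.assoc cis_mult by (simp add: algebra_simps)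
  have Re_le: "Re (\<phi> t) \<le> \<rho>" for t
    using complex_Re_le_cmod[of "\<phi> t"] h_le[of t] by (simp add: \<phi>_def norm_mult norm_\<sigma>)
  have integral: "(\<phi> has_integral \<sigma> * (2 * pi * c 1 * \<rho>)) {0..2*pi}"
    using has_integral_mult_right[OF coeff[of "- 1"], of \<sigma>]
    unfolding \<phi>_def[abs_def] by simp
  have coeff_neg: "((\<lambda>t. \<phi> t * cis (of_int (- (int k - 1)) * t)) has_integral
      \<sigma> * (2 * pi * c k * \<rho> ^ k)) {0..2*pi}"
    using has_integral_mult_right[OF coeff[of "- int k"], of \<sigma>] unfolding shift by simp
  have coeff_pos: "((\<lambda>t. \<phi> t * cis (of_int (int k - 1) * t)) has_integral 0) {0..2*pi}"
    using has_integral_mult_right[OF coeff[of "int k - 2"], of \<sigma>] \<open>2 \<le> k\<close> \<open>c 0 = 0\<close>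
    unfolding shift by (cases "k = 2") auto
  have bound: "norm (\<sigma> * (2 * pi * c k * \<rho> ^ k)) \<le> 2 * (2 * pi * \<rho> - Re (\<sigma> * (2 * pi * c 1 * \<rho>)))"
    using \<open>2 \<le> k\<close> by (intro fourier_coeff_norm_le_of_Re_le[OF Re_le integral coeff_neg coeff_pos]) simp
  have "\<sigma> * (2 * pi * c 1 * \<rho>) = of_real (2 * pi * \<rho>) * (\<sigma> * c 1)"
    by (simp add: mult_ac)
  then have mean: "\<sigma> * (2 * pi * c 1 * \<rho>) = of_real (2 * pi * \<rho> * norm (c 1))"
    using \<sigma>_c1 by simp
  have "0 \<le> \<rho>"
    using h_le[of 0] norm_ge_zero order_trans by blast
  with bound have "2 * pi * (norm (c k) * \<rho> ^ k) \<le> 2 * pi * (2 * \<rho> * (1 - norm (c 1)))"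
    unfolding mean by (simp add: norm_mult norm_power norm_\<sigma> algebra_simps)
  then show ?thesis
    by (rule mult_left_le_imp_le) simp
qed

lemma Schwarz_fps_coeff_bound_circle:
  assumes w: "w holomorphic_on ball 0 1" and Schwarz: "\<And>z. norm z < 1 \<Longrightarrow> norm (w z) \<le> norm z"
    and "2 \<le> k" and "0 \<le> \<rho>" "\<rho> < 1"
  shows "norm (fps_expansion w 0 $ k) * \<rho> ^ k \<le> 2 * \<rho> * (1 - norm (fps_expansion w 0 $ 1))"
proof -
  define c where "c n = fps_expansion w 0 $ n" for n
  define h where "h t = w (of_real \<rho> * cis t)" for t
  have c0: "c 0 = 0"
    using Schwarz[of 0] by (simp add: c_def fps_expansion_def)
  have sums: "(\<lambda>n. c n * z ^ n) sums w z" if "z \<in> ball 0 1" for z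
    unfolding c_def by (rule holomorphic_on_ball_sums_fps_expansion[OF w that])
  have "norm (of_real \<rho> * cis t) < 1" for t
    using assms by (simp add: norm_mult)
  then have h_sums: "(\<lambda>n. c n * (of_real \<rho> * cis t) ^ n) sums h t" and h_le: "norm (h t) \<le> \<rho>" for t
    using sums Schwarz[of "of_real \<rho> * cis t"] \<open>0 \<le> \<rho>\<close> by (auto simp: h_def norm_mult)
  show ?thesis
    unfolding c_def[symmetric]
    using h_le powser_circle_fourier_coeff[OF disc_powser_abs_summable[OF sums assms(4,5)] \<open>0 \<le> \<rho>\<close> h_sums]
      c0 \<open>2 \<le> k\<close>
    by (rule fourier_coeff_bound_of_norm_le)
qed

lemma Schwarz_fps_coeff_bound:
  assumes w: "w holomorphic_on ball 0 1" and Schwarz: "\<And>z. norm z < 1 \<Longrightarrow> norm (w z) \<le> norm z"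
    and "2 \<le> k"
  shows "norm (fps_expansion w 0 $ k) \<le> 2 * (1 - norm (fps_expansion w 0 $ 1))"
proof -
  let ?a = "norm (fps_expansion w 0 $ k)" and ?b = "2 * (1 - norm (fps_expansion w 0 $ 1))"
  have "?a * \<rho> ^ (k - 1) \<le> ?b" if "\<rho> \<in> {0<..<1}" for \<rho>
  proof -
    have "\<rho> * (?a * \<rho> ^ (k - 1)) \<le> \<rho> * ?b"
      using Schwarz_fps_coeff_bound_circle[OF w Schwarz \<open>2 \<le> k\<close>, of \<rho>] that \<open>2 \<le> k\<close>
      by (simp add: power_eq_if mult_ac)
    then show ?thesis using that by simp
  qed
  then have "eventually (\<lambda>\<rho>. ?a * \<rho> ^ (k - 1) \<le> ?b) (at_left 1)"
    using eventually_at_left_real[of 0 "1::real"] by (auto elim: eventually_mono)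
  moreover have "((\<lambda>\<rho>. ?a * \<rho> ^ (k - 1)) \<longlongrightarrow> ?a * 1 ^ (k - 1)) (at_left 1)"
    by (intro tendsto_intros)
  ultimately have "?a * 1 ^ (k - 1) \<le> ?b"
    by (intro tendsto_le[OF _ tendsto_const]) auto
  then show ?thesis by simp
qed

lemma geometric_tail_le_of_le_third:
  fixes r :: real
  assumes "0 \<le> r" and "r \<le> 1/3"
  shows "2 * r ^ 2 * (\<Sum>k<N. r ^ k) \<le> r"
proof -
  have "(\<Sum>k<N. r ^ k) \<le> (\<Sum>k. r ^ k)"
    using assms by (intro sum_le_suminf summable_geometric) auto
  also have "\<dots> = 1 / (1 - r)"
    using assms by (intro suminf_geometric) simp
  also have "\<dots> \<le> 3/2"
    using assms(2) by (simp add: field_simps)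
  finally have "2 * r * (\<Sum>k<N. r ^ k) \<le> 2 * (1/3) * (3/2)"
    using assms by (intro mult_mono) (auto simp: sum_nonneg)
  then have "r * (2 * r * (\<Sum>k<N. r ^ k)) \<le> r * 1"
    using assms(1) by (intro mult_left_mono) auto
  then show ?thesis
    by (simp add: power2_eq_square mult_ac)
qed

lemma Schwarz_fps_abs_sum_le:
  assumes w: "w holomorphic_on ball 0 1" and Schwarz: "\<And>z. norm z < 1 \<Longrightarrow> norm (w z) \<le> norm z"
    and "0 \<le> r" "r \<le> 1/3"
  shows "fps_abs_sum r N (fps_expansion w 0) \<le> r"
proof -
  define A where "A = norm (fps_expansion w 0 $ 1)"
  define e where "e k = (if k = 0 then 0 else if k = 1 then A * r else 2 * (1 - A) * r ^ k)" for k
  have "norm (fps_expansion w 0 $ 2) \<le> 2 * (1 - A)"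
    unfolding A_def using w Schwarz by (intro Schwarz_fps_coeff_bound) auto
  then have A: "0 \<le> A" "A \<le> 1"
    unfolding A_def by (smt (verit) norm_ge_zero)+
  have "norm (fps_expansion w 0 $ k) * r ^ k \<le> e k" for k
  proof -
    consider "k = 0" | "k = 1" | "2 \<le> k" by linarith
    then show ?thesis
    proof cases
      case 1 then show ?thesis using Schwarz[of 0] by (simp add: e_def fps_expansion_def)
    next
      case 2 then show ?thesis by (simp add: e_def A_def)
    next
      case 3 then show ?thesis
        using Schwarz_fps_coeff_bound[OF w Schwarz 3] \<open>0 \<le> r\<close> by (simp add: e_def A_def mult_right_mono)
    qed
  qed
  then have "fps_abs_sum r N (fps_expansion w 0) \<le> (\<Sum>k<N + 2. e k)"
    unfolding fps_abs_sum_def using A \<open>0 \<le> r\<close>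
    by (intro order.trans[OF sum_mono sum_mono2]) (auto simp: e_def)
  also have "\<dots> = A * r + (1 - A) * (2 * r ^ 2 * (\<Sum>k<N. r ^ k))"
    by (simp add: sum.lessThan_Suc_shift e_def sum_distrib_left power_add power2_eq_square algebra_simps
        del: sum.lessThan_Suc)
  also have "\<dots> \<le> A * r + (1 - A) * r"
    using A geometric_tail_le_of_le_third[OF assms(3,4), of N] by (intro add_left_mono mult_left_mono) auto
  finally show ?thesis by (simp add: algebra_simps)
qed

section \<open>Subordination\<close>

lemma subordinate_fps_compose:
  fixes f g :: "complex \<Rightarrow> complex" and a b :: "nat \<Rightarrow> complex"
  assumes sums_f: "\<And>z. z \<in> ball 0 1 \<Longrightarrow> (\<lambda>n. a n * z ^ n) sums f z"
    and sums_g: "\<And>z. z \<in> ball 0 1 \<Longrightarrow> (\<lambda>n. b n * z ^ n) sums g z"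
    and "subordinate f g"
  obtains w where "w holomorphic_on ball 0 1" and "\<And>z. norm z < 1 \<Longrightarrow> norm (w z) \<le> norm z"
    and "Abs_fps a = Abs_fps b oo fps_expansion w 0"
proof -
  obtain w where w: "w holomorphic_on ball 0 1" and w_ball: "w ` ball 0 1 \<subseteq> ball 0 1"
    and "w 0 = 0" and f_eq: "\<And>z. z \<in> ball 0 1 \<Longrightarrow> f z = g (w z)"
    using \<open>subordinate f g\<close> unfolding subordinate_def by blast
  have "norm (w z) \<le> norm z" if "norm z < 1" for z
    using w_ball by (intro Schwarz_Lemma(1)[OF w \<open>w 0 = 0\<close> _ that]) force
  moreover have "Abs_fps a = Abs_fps b oo fps_expansion w 0"
  proof (rule fps_expansion_unique_complex)
    show "(g \<circ> w) has_fps_expansion Abs_fps a"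
      using sums_f f_eq by (intro disc_powser_has_fps_expansion) auto
    have "fps_expansion w 0 $ 0 = 0"
      using \<open>w 0 = 0\<close> by (simp add: fps_expansion_def)
    then show "(g \<circ> w) has_fps_expansion (Abs_fps b oo fps_expansion w 0)"
      by (intro has_fps_expansion_compose disc_powser_has_fps_expansion[OF sums_g]
          holomorphic_on_ball_has_fps_expansion w)
  qed
  ultimately show ?thesis using w that by blast
qed

lemma subordinate_abs_sum_le:
  fixes f g :: "complex \<Rightarrow> complex" and a b :: "nat \<Rightarrow> complex"
  assumes sums_f: "\<And>z. z \<in> ball 0 1 \<Longrightarrow> (\<lambda>n. a n * z ^ n) sums f z"
    and sums_g: "\<And>z. z \<in> ball 0 1 \<Longrightarrow> (\<lambda>n. b n * z ^ n) sums g z"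
    and "subordinate f g" and "0 \<le> r" "r \<le> 1/3"
  shows "(\<Sum>n. norm (a n) * r ^ n) \<le> (\<Sum>n. norm (b n) * r ^ n)"
proof (rule suminf_le_suminf_of_partial_sums_le)
  obtain w where w: "w holomorphic_on ball 0 1" and Schwarz: "\<And>z. norm z < 1 \<Longrightarrow> norm (w z) \<le> norm z"
    and compose: "Abs_fps a = Abs_fps b oo fps_expansion w 0"
    using subordinate_fps_compose[OF sums_f sums_g \<open>subordinate f g\<close>] by blast
  have "fps_expansion w 0 $ 0 = 0"
    using Schwarz[of 0] by (simp add: fps_expansion_def)
  moreover have "fps_abs_sum r N (fps_expansion w 0) \<le> r" for N
    using w Schwarz assms(4,5) by (rule Schwarz_fps_abs_sum_le)
  ultimately have "fps_abs_sum r N (Abs_fps b oo fps_expansion w 0) \<le> fps_abs_sum r N (Abs_fps b)" for N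
    using \<open>0 \<le> r\<close> by (intro fps_abs_sum_compose_le)
  then show "(\<Sum>k<N. norm (a k) * r ^ k) \<le> (\<Sum>k<N. norm (b k) * r ^ k)" for N
    by (simp add: fps_abs_sum_def compose[symmetric])
  show "summable (\<lambda>n. norm (a n) * r ^ n)" "summable (\<lambda>n. norm (b n) * r ^ n)"
    using assms(4,5) by (auto intro: disc_powser_abs_summable sums_f sums_g)
qed

lemma subordinate_sq_sum_le:
  fixes f g :: "complex \<Rightarrow> complex" and a b :: "nat \<Rightarrow> complex"
  assumes sums_f: "\<And>z. z \<in> ball 0 1 \<Longrightarrow> (\<lambda>n. a n * z ^ n) sums f z"
    and sums_g: "\<And>z. z \<in> ball 0 1 \<Longrightarrow> (\<lambda>n. b n * z ^ n) sums g z"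
    and "subordinate f g" and "0 \<le> r" "r < 1"
  shows "(\<Sum>n. norm (a n) ^ 2 * r ^ (2 * n)) \<le> (\<Sum>n. norm (b n) ^ 2 * r ^ (2 * n))"
proof (rule suminf_le_suminf_of_partial_sums_le)
  obtain w where w: "w holomorphic_on ball 0 1" and Schwarz: "\<And>z. norm z < 1 \<Longrightarrow> norm (w z) \<le> norm z"
    and compose: "Abs_fps a = Abs_fps b oo fps_expansion w 0"
    using subordinate_fps_compose[OF sums_f sums_g \<open>subordinate f g\<close>] by blast
  have "fps_expansion w 0 $ 0 = 0"
    using Schwarz[of 0] by (simp add: fps_expansion_def)
  moreover have "norm (w (of_real r * cis t)) \<le> r" for t
    using Schwarz[of "of_real r * cis t"] assms(4,5) by (simp add: norm_mult)
  then have "fps_sq_sum r N (fps_expansion w 0 * Q) \<le> r ^ 2 * fps_sq_sum r N Q" for N Q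
    using w assms(4,5) by (intro fps_sq_sum_fps_expansion_mult_le)
  ultimately have "fps_sq_sum r N (Abs_fps b oo fps_expansion w 0) \<le> fps_sq_sum r N (Abs_fps b)" for N
    using \<open>0 \<le> r\<close> by (intro fps_sq_sum_compose_le)
  then show "(\<Sum>k<N. norm (a k) ^ 2 * r ^ (2 * k)) \<le> (\<Sum>k<N. norm (b k) ^ 2 * r ^ (2 * k))" for N
    by (simp add: fps_sq_sum_def compose[symmetric])
  show "summable (\<lambda>n. norm (a n) ^ 2 * r ^ (2 * n))" "summable (\<lambda>n. norm (b n) ^ 2 * r ^ (2 * n))"
    using assms(4,5) by (auto intro: disc_powser_sq_summable sums_f sums_g)
qed

lemma subordinate_sq_sum_tail_le:
  fixes f g :: "complex \<Rightarrow> complex" and a b :: "nat \<Rightarrow> complex"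
  assumes sums_f: "\<And>z. z \<in> ball 0 1 \<Longrightarrow> (\<lambda>n. a n * z ^ n) sums f z"
    and sums_g: "\<And>z. z \<in> ball 0 1 \<Longrightarrow> (\<lambda>n. b n * z ^ n) sums g z"
    and "subordinate f g" and "0 \<le> r" "r < 1"
  shows "(\<Sum>n. norm (a (Suc n)) ^ 2 * r ^ (2 * Suc n)) \<le> (\<Sum>n. norm (b (Suc n)) ^ 2 * r ^ (2 * Suc n))"
proof -
  obtain w where "Abs_fps a = Abs_fps b oo fps_expansion w 0"
    using subordinate_fps_compose[OF sums_f sums_g \<open>subordinate f g\<close>] by blast
  then have "a 0 = b 0"
    by (metis fps_compose_nth_0 fps_nth_Abs_fps)
  then show ?thesis
    using subordinate_sq_sum_le[OF assms]
      suminf_split_head[OF disc_powser_sq_summable[OF sums_f assms(4,5)]]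
      suminf_split_head[OF disc_powser_sq_summable[OF sums_g assms(4,5)]]
    by simp
qed

theorem lemma2:
  fixes f g :: "complex \<Rightarrow> complex" and a b :: "nat \<Rightarrow> complex" and r :: real
  assumes "f holomorphic_on ball 0 1" and "g holomorphic_on ball 0 1"
    and "\<And>z. z \<in> ball 0 1 \<Longrightarrow> (\<lambda>n. a n * z ^ n) sums f z"
    and "\<And>z. z \<in> ball 0 1 \<Longrightarrow> (\<lambda>n. b n * z ^ n) sums g z"
    and "subordinate f g"
    and "0 \<le> r" and "r \<le> 1/3"
  shows "(\<Sum>n. norm (a n) * r ^ n)
           + (1 / (1 + norm (a 0)) + r / (1 - r)) * (\<Sum>n. norm (a (Suc n)) ^ 2 * r ^ (2 * Suc n))
         \<le> (\<Sum>n. norm (b n) * r ^ n)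
           + (1 / (1 + norm (a 0)) + r / (1 - r)) * (\<Sum>n. norm (b (Suc n)) ^ 2 * r ^ (2 * Suc n))"
proof (rule add_mono[OF _ mult_left_mono])
  show "(\<Sum>n. norm (a n) * r ^ n) \<le> (\<Sum>n. norm (b n) * r ^ n)"
    using assms(3-7) by (rule subordinate_abs_sum_le)
  show "(\<Sum>n. norm (a (Suc n)) ^ 2 * r ^ (2 * Suc n)) \<le> (\<Sum>n. norm (b (Suc n)) ^ 2 * r ^ (2 * Suc n))"
    using assms(3-7) by (intro subordinate_sq_sum_tail_le) auto
  show "0 \<le> 1 / (1 + norm (a 0)) + r / (1 - r)"
    using assms(6,7) by simp
qed

end
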